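(* Let $n^*_1,n^*_2\ge 1$ be integers, $n^*=n^*_1+n^*_2$. Let $X_1,\dots,X_{n^*}$ be dependent nonnegative random variables sharing an Archimedean copula with generator $\psi_1$ (with $\phi_1=\psi_1^{-1}$), where $X_i$ has distribution function $x\mapsto F_1(\lambda_1x)$ for $i=1,\dots,n^*_1$ and $X_j$ has distribution function $x\mapsto F_2(\lambda_2x)$ for $j=n^*_1+1,\dots,n^*$, with $\lambda_1,\lambda_2>0$. Let $Y_1,\dots,Y_{n^*}$ be dependent nonnegative random variables sharing an Archimedean copula with generator $\psi_2$ (with $\phi_2=\psi_2^{-1}$), where $Y_i$ has distribution function $x\mapsto F_1(\mu_1x)$ for $i=1,\dots,n^*_1$ and $Y_j$ has distribution function $x\mapsto F_2(\mu_2x)$ for $j=n^*_1+1,\dots,n^*$, with $\mu_1,\mu_2>0$. Let $X_{n^*:n^*}(n^*_1,n^*_2)=\max_i X_i$ and $Y_{n^*:n^*}(n^*_1,n^*_2)=\max_i Y_i$. Suppose $\phi_2\circ\psi_1$ is super-additive, $\psi_1$ or $\psi_2$ is log-convex, and $\tilde r_1$ or $\tilde r_2$ is decreasing. Suppose further that either (a) $\tilde r_1(x)\ge \tilde r_2(x)$ for all $x>0$, $n^*_1\ge n^*_2$, and $\boldsymbol\lambda=(\lambda_1,\lambda_2),\boldsymbol\mu=(\mu_1,\mu_2)\in\mathcal E_+$; or (b) $\tilde r_1(x)\le \tilde r_2(x)$ for all $x>0$, $n^*_1\le n^*_2$, and $\boldsymbol\lambda,\boldsymbol\mu\in\mathcal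 D_+$. Then $$(\underbrace{\lambda_1,\dots,\lambda_1}_{n^*_1},\underbrace{\lambda_2,\dots,\lambda_2}_{n^*_2})\succeq^{w}(\underbrace{\mu_1,\dots,\mu_1}_{n^*_1},\underbrace{\mu_2,\dots,\mu_2}_{n^*_2})\ \Longrightarrow\ Y_{n^*:n^*}(n^*_1,n^*_2)\le_{st}X_{n^*:n^*}(n^*_1,n^*_2).$$
   Context: Archimedean copula: a generator is a continuous nonincreasing $\psi:[0,\infty)\to[0,1]$ with $\psi(0)=1$, $\psi(\infty)=0$, which is $n$-monotone so that it generates an $n$-dimensional copula; $\phi=\psi^{-1}$ is its (right-continuous) inverse. Random variables $Z_1,\dots,Z_m$ with marginal distribution functions $G_1,\dots,G_m$ share an Archimedean copula with generator $\psi$ if $P(Z_1\le z_1,\dots,Z_m\le z_m)=\psi\big(\sum_{i=1}^m\phi(G_i(z_i))\big)$. $F_1,F_2$ are absolutely continuous baseline distribution functions of nonnegative random variables with densities $f_1,f_2$; $\tilde r_k=f_k/F_k$ is the reversed hazard rate of $F_k$. A function $g$ is super-additive if $g(x)+g(y)\le g(x+y)$ for all $x,y$ in its domain. $\mathcal E_+=\{(x_1,x_2):0<x_1\le x_2\}$, $\mathcal D_+=\{(x_1,x_2):x_1\ge x_2>0\}$. For vectors $\boldsymbol a,\boldsymbol b\in\mathbb R^k$ with increasingly ordered coordinates $a_{(1)}\le\dots\le a_{(k)}$, $b_{(1)}\le\dots\le b_{(k)}$: $\boldsymbol a\succeq^{w}\boldsymbol b$ means $\sum_{i=1}^l b_{(i)}\ge\sum_{i=1}^l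 a_{(i)}$ for all $l=1,\dots,k$. $U\le_{st}V$ means $P(U>x)\le P(V>x)$ for all $x$. "Increasing/decreasing" mean nondecreasing/nonincreasing. *)

theory Defs
  imports "HOL-Probability.Probability"
begin

(* n-monotonicity of a function on (0,oo) (McNeil & Neslehova 2009), n >= 2 *)
definition n_monotone :: "nat \<Rightarrow> (real \<Rightarrow> real) \<Rightarrow> bool" where
  "n_monotone n \<psi> \<longleftrightarrow>
     (\<forall>k < n - 2. \<forall>x > 0. ((deriv ^^ k) \<psi>) differentiable (at x)) \<and>
     (\<forall>k \<le> n - 2. \<forall>x > 0. (-1) ^ k * (deriv ^^ k) \<psi> x \<ge> 0) \<and>
     antimono_on {0<..} (\<lambda>x. (-1) ^ (n - 2) * (deriv ^^ (n - 2)) \<psi> x) \<and>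
     convex_on {0<..} (\<lambda>x. (-1) ^ (n - 2) * (deriv ^^ (n - 2)) \<psi> x)"

(* Archimedean generator of an n-dimensional copula (only values on [0,oo) matter) *)
definition arch_generator :: "nat \<Rightarrow> (real \<Rightarrow> real) \<Rightarrow> bool" where
  "arch_generator n \<psi> \<longleftrightarrow>
     continuous_on {0..} \<psi> \<and> antimono_on {0..} \<psi> \<and>
     (\<forall>x \<ge> 0. 0 \<le> \<psi> x \<and> \<psi> x \<le> 1) \<and>
     \<psi> 0 = 1 \<and> (\<psi> \<longlongrightarrow> 0) at_top \<and> n_monotone n \<psi>"

(* generalized inverse phi = psi^{-1}: [0,1] -> [0,oo], phi(u) = inf {x >= 0. psi x <= u},
   with inf {} = oo (so phi 0 = oo for strict generators) *)
definition gen_inv :: "(real \<Rightarrow> real) \<Rightarrow> real \<Rightarrow> ereal" where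
  "gen_inv \<psi> u = Inf (ereal ` {x. 0 \<le> x \<and> \<psi> x \<le> u})"

definition psi_ext :: "(real \<Rightarrow> real) \<Rightarrow> ereal \<Rightarrow> real" where
  "psi_ext \<psi> t = (if t = \<infinity> then 0 else \<psi> (real_of_ereal t))"

definition arch_copula :: "(real \<Rightarrow> real) \<Rightarrow> nat \<Rightarrow> (nat \<Rightarrow> real) \<Rightarrow> real" where
  "arch_copula \<psi> n u = psi_ext \<psi> (\<Sum>i<n. gen_inv \<psi> (u i))"

definition super_additive_on :: "real set \<Rightarrow> (real \<Rightarrow> ereal) \<Rightarrow> bool" where
  "super_additive_on S g \<longleftrightarrow>
     (\<forall>x\<in>S. \<forall>y\<in>S. x + y \<in> S \<longrightarrow> g x + g y \<le> g (x + y))"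

definition log_convex_on :: "real set \<Rightarrow> (real \<Rightarrow> real) \<Rightarrow> bool" where
  "log_convex_on S f \<longleftrightarrow> (\<forall>x\<in>S. f x > 0) \<and> convex_on S (\<lambda>x. ln (f x))"

definition abs_cont_cdf_nonneg :: "(real \<Rightarrow> real) \<Rightarrow> (real \<Rightarrow> real) \<Rightarrow> bool" where
  "abs_cont_cdf_nonneg F f \<longleftrightarrow>
     mono F \<and> (F \<longlongrightarrow> 0) at_bot \<and> (F \<longlongrightarrow> 1) at_top \<and>
     (\<forall>x < 0. F x = 0) \<and>
     (\<forall>x. 0 \<le> f x) \<and> (\<forall>x. (f has_integral F x) {..x})"

definition rev_hazard :: "(real \<Rightarrow> real) \<Rightarrow> (real \<Rightarrow> real) \<Rightarrow> real \<Rightarrow> real" where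
  "rev_hazard F f x = f x / F x"

(* a \<succeq>^w b : partial sums of increasingly ordered b dominate those of a *)
definition wmaj_ge :: "real list \<Rightarrow> real list \<Rightarrow> bool" where
  "wmaj_ge a b \<longleftrightarrow> length a = length b \<and>
     (\<forall>l \<in> {1..length a}. sum_list (take l (sort a)) \<le> sum_list (take l (sort b)))"

end

theory Submission
  imports Defs
begin

text \<open>The event \<open>max Y \<le> x\<close> has probability \<open>C\<^sub>\<psi>\<^sub>2(u\<^sub>\<mu>)\<close>, where \<open>u\<^sub>\<mu>\<close> has \<open>n\<^sub>1\<close> entries
  \<open>F\<^sub>1(\<mu>\<^sub>1 x)\<close> and \<open>n\<^sub>2\<close> entries \<open>F\<^sub>2(\<mu>\<^sub>2 x)\<close>, and likewise for \<open>X\<close>; so it suffices to show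
  \<open>C\<^sub>\<psi>\<^sub>1(u\<^sub>\<lambda>) \<le> C\<^sub>\<psi>\<^sub>2(u\<^sub>\<mu>)\<close>. Super-additivity of \<open>\<phi>\<^sub>2 \<circ> \<psi>\<^sub>1\<close> gives \<open>C\<^sub>\<psi>\<^sub>1 \<le> C\<^sub>\<psi>\<^sub>2\<close>
  pointwise, so it remains to compare \<open>u\<^sub>\<lambda>\<close> with \<open>u\<^sub>\<mu>\<close> under one log-convex generator \<open>\<psi>\<close>.
  Then \<open>k(y) = \<phi>(e\<^sup>-\<^sup>y)\<close> is increasing and convex, and
  \<open>C\<^sub>\<psi>(u\<^sub>\<lambda>) = \<psi>(n\<^sub>1 k(-ln F\<^sub>1(\<lambda>\<^sub>1 x)) + n\<^sub>2 k(-ln F\<^sub>2(\<lambda>\<^sub>2 x)))\<close>. Weak majorization yields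
  \<open>min \<lambda> \<le> min \<mu>\<close> and \<open>n\<^sub>1\<lambda>\<^sub>1 + n\<^sub>2\<lambda>\<^sub>2 \<le> n\<^sub>1\<mu>\<^sub>1 + n\<^sub>2\<mu>\<^sub>2\<close>. Increasing the scales only
  decreases the argument of \<open>\<psi>\<close>; the remaining step moves the smaller scale up and the larger one
  down at constant weighted sum, and there the ordered reversed hazard rates (through Gronwall's
  inequality) make \<open>-ln F\<close> of the smaller scale fall at least as fast as \<open>-ln F\<close> of the larger
  one rises, which convexity of \<open>k\<close> preserves.\<close>

text \<open>An Archimedean generator without the \<open>n\<close>-monotonicity requirement, which the argument
  never uses.\<close>
definition generator :: "(real \<Rightarrow> real) \<Rightarrow> bool" where
  "generator \<psi> \<longleftrightarrow> continuous_on {0..} \<psi> \<and> antimono_on {0..} \<psi> \<and>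
     (\<forall>x \<ge> 0. 0 \<le> \<psi> x \<and> \<psi> x \<le> 1) \<and> \<psi> 0 = 1 \<and> (\<psi> \<longlongrightarrow> 0) at_top"

lemma arch_generator_imp_generator: "arch_generator n \<psi> \<Longrightarrow> generator \<psi>"
  unfolding arch_generator_def generator_def by blast

lemma gen_inv_nonneg: "0 \<le> gen_inv \<psi> u"
  unfolding gen_inv_def by (auto intro!: Inf_greatest)

lemma gen_inv_antimono: "u \<le> v \<Longrightarrow> gen_inv \<psi> v \<le> gen_inv \<psi> u"
  unfolding gen_inv_def by (rule Inf_superset_mono) auto

lemma gen_inv_eq_least:
  assumes g: "generator \<psi>" and x0: "0 \<le> x0" "\<psi> x0 \<le> u" and u: "u \<le> 1"
  obtains t where "0 \<le> t" "gen_inv \<psi> u = ereal t" "\<psi> t = u" "\<And>x. 0 \<le> x \<Longrightarrow> \<psi> x \<le> u \<Longrightarrow> t \<le> x"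
proof -
  define S where "S = {x. 0 \<le> x \<and> \<psi> x \<le> u}"
  have cont: "continuous_on {0..} \<psi>" and \<psi>0: "\<psi> 0 = 1" using g by (simp_all add: generator_def)
  have "closed ({0..} \<inter> \<psi> -` {..u})"
    by (rule continuous_closed_preimage[OF cont]) auto
  moreover have "{0..} \<inter> \<psi> -` {..u} = S" unfolding S_def by auto
  ultimately have "closed S" by simp
  moreover have "S \<noteq> {}" using x0 unfolding S_def by auto
  moreover have bdd: "bdd_below S" unfolding S_def by (auto intro: bdd_belowI[of _ 0])
  ultimately have tS: "Inf S \<in> S" using closed_contains_Inf by blast
  have least: "\<And>x. x \<in> S \<Longrightarrow> Inf S \<le> x" using bdd by (simp add: cInf_lower)
  have "gen_inv \<psi> u = ereal (Inf S)"
    unfolding gen_inv_def S_def[symmetric] by (rule cInf_eq_minimum) (use tS least in auto)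
  moreover have "\<psi> (Inf S) = u"
  proof (rule ccontr)
    assume "\<psi> (Inf S) \<noteq> u"
    then have "\<psi> (Inf S) < u" using tS unfolding S_def by simp
    moreover have "continuous_on {0..Inf S} \<psi>" using cont by (rule continuous_on_subset) auto
    ultimately obtain x where x: "0 \<le> x" "x \<le> Inf S" "\<psi> x = u"
      using IVT2'[of \<psi> "Inf S" u 0] \<psi>0 u tS unfolding S_def by auto
    then have "x = Inf S" using least[of x] unfolding S_def by auto
    with x \<open>\<psi> (Inf S) \<noteq> u\<close> show False by simp
  qed
  ultimately show thesis using that tS least unfolding S_def by auto
qed

lemma gen_inv_eq_least_pos:
  assumes g: "generator \<psi>" and u: "0 < u" "u \<le> 1"
  obtains t where "0 \<le> t" "gen_inv \<psi> u = ereal t" "\<psi> t = u" "\<And>x. 0 \<le> x \<Longrightarrow> \<psi> x \<le> u \<Longrightarrow> t \<le> x"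
proof -
  have "(\<psi> \<longlongrightarrow> 0) at_top" using g by (simp add: generator_def)
  then have "eventually (\<lambda>x. \<psi> x < u) at_top" using u by (simp add: order_tendstoD(2))
  then obtain x0 where "\<And>x. x \<ge> x0 \<Longrightarrow> \<psi> x < u" by (auto simp: eventually_at_top_linorder)
  then have "0 \<le> max x0 0" "\<psi> (max x0 0) \<le> u" by (auto intro: less_imp_le)
  from gen_inv_eq_least[OF g this u(2)] that show thesis by blast
qed

lemma psi_ext_gen_inv:
  assumes g: "generator \<psi>" and u: "0 \<le> u" "u \<le> 1"
  shows "psi_ext \<psi> (gen_inv \<psi> u) = u"
proof (cases "\<exists>x\<ge>0. \<psi> x \<le> u")
  case True
  then obtain x0 where x0: "0 \<le> x0" "\<psi> x0 \<le> u" by blast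
  obtain t where "0 \<le> t" "gen_inv \<psi> u = ereal t" "\<psi> t = u"
    "\<And>x. 0 \<le> x \<Longrightarrow> \<psi> x \<le> u \<Longrightarrow> t \<le> x"
    using gen_inv_eq_least[OF g x0 u(2)] by blast
  then show ?thesis by (simp add: psi_ext_def)
next
  case False
  have "gen_inv \<psi> u = \<infinity>"
  proof -
    have "{x. 0 \<le> x \<and> \<psi> x \<le> u} = {}" using False by auto
    then show ?thesis unfolding gen_inv_def by (simp only:) (simp add: top_ereal_def)
  qed
  moreover have "u = 0"
  proof (rule ccontr)
    assume "u \<noteq> 0"
    with u have "0 < u" by simp
    then obtain t where "0 \<le> t" "gen_inv \<psi> u = ereal t" "\<psi> t = u"
      "\<And>x. 0 \<le> x \<Longrightarrow> \<psi> x \<le> u \<Longrightarrow> t \<le> x"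
      using gen_inv_eq_least_pos[OF g _ u(2)] by blast
    with False show False by auto
  qed
  ultimately show ?thesis by (simp add: psi_ext_def)
qed

lemma psi_ext_nonneg: "generator \<psi> \<Longrightarrow> 0 \<le> s \<Longrightarrow> 0 \<le> psi_ext \<psi> s"
  unfolding psi_ext_def generator_def by (cases s) auto

lemma psi_ext_antimono:
  assumes g: "generator \<psi>" and st: "0 \<le> s" "s \<le> t"
  shows "psi_ext \<psi> t \<le> psi_ext \<psi> s"
proof (cases "t = \<infinity>")
  case True
  then show ?thesis using psi_ext_nonneg[OF g st(1)] by (simp add: psi_ext_def)
next
  case False
  then obtain a b where ab: "s = ereal a" "t = ereal b" "0 \<le> a" "a \<le> b"
    using st by (cases s; cases t) auto
  moreover have "antimono_on {0..} \<psi>" using g by (simp add: generator_def)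
  ultimately show ?thesis by (auto simp: psi_ext_def monotone_on_def)
qed

lemma arch_copula_nonneg: "generator \<psi> \<Longrightarrow> 0 \<le> arch_copula \<psi> n u"
  unfolding arch_copula_def by (rule psi_ext_nonneg) (auto intro: sum_nonneg gen_inv_nonneg)

lemma super_additive_on_sum:
  fixes h :: "real \<Rightarrow> ereal"
  assumes sa: "super_additive_on {0..} h" and h0: "0 \<le> h 0"
    and "finite I" and t: "\<And>i. i \<in> I \<Longrightarrow> 0 \<le> t i"
  shows "(\<Sum>i\<in>I. h (t i)) \<le> h (\<Sum>i\<in>I. t i)"
  using \<open>finite I\<close> t
proof (induction I rule: finite_induct)
  case empty
  then show ?case using h0 by simp
next
  case (insert j I)
  have "(\<Sum>i\<in>insert j I. h (t i)) \<le> h (t j) + h (\<Sum>i\<in>I. t i)"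
    using insert by (simp add: add_left_mono)
  also have "\<dots> \<le> h (t j + (\<Sum>i\<in>I. t i))"
    using sa insert.prems unfolding super_additive_on_def by (auto intro!: sum_nonneg)
  finally show ?case using insert by simp
qed

text \<open>\<open>\<phi>\<^sub>2 \<circ> \<psi>\<^sub>1\<close> maps \<open>\<Sum> \<phi>\<^sub>1(u\<^sub>i)\<close> above \<open>\<Sum> \<phi>\<^sub>2(u\<^sub>i)\<close>.\<close>
lemma arch_copula_le_of_super_additive:
  assumes g1: "generator \<psi>1" and g2: "generator \<psi>2"
    and sa: "super_additive_on {0..} (\<lambda>x. gen_inv \<psi>2 (\<psi>1 x))"
    and u: "\<And>i. i < n \<Longrightarrow> 0 \<le> u i \<and> u i \<le> 1"
  shows "arch_copula \<psi>1 n u \<le> arch_copula \<psi>2 n u"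
proof (cases "(\<Sum>i<n. gen_inv \<psi>1 (u i)) = \<infinity>")
  case True
  then show ?thesis using arch_copula_nonneg[OF g2] by (simp add: arch_copula_def psi_ext_def)
next
  case False
  define t where "t i = real_of_ereal (gen_inv \<psi>1 (u i))" for i
  have t: "gen_inv \<psi>1 (u i) = ereal (t i)" if "i < n" for i
    using False that gen_inv_nonneg[of \<psi>1 "u i"] unfolding t_def
    by (cases "gen_inv \<psi>1 (u i)") (auto simp: sum_Pinfty)
  have t0: "0 \<le> t i" if "i < n" for i
    using t[OF that] gen_inv_nonneg[of \<psi>1 "u i"] by simp
  have \<psi>1t: "\<psi>1 (t i) = u i" if "i < n" for i
    using psi_ext_gen_inv[OF g1, of "u i"] u[OF that] t[OF that] by (simp add: psi_ext_def)
  define T where "T = (\<Sum>i<n. t i)"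
  have T0: "0 \<le> T" unfolding T_def using t0 by (auto intro: sum_nonneg)
  have "(\<Sum>i<n. gen_inv \<psi>2 (u i)) = (\<Sum>i<n. gen_inv \<psi>2 (\<psi>1 (t i)))" using \<psi>1t by simp
  also have "\<dots> \<le> gen_inv \<psi>2 (\<psi>1 T)"
    unfolding T_def by (rule super_additive_on_sum[OF sa gen_inv_nonneg]) (use t0 in auto)
  finally have le: "(\<Sum>i<n. gen_inv \<psi>2 (u i)) \<le> gen_inv \<psi>2 (\<psi>1 T)" .
  have "arch_copula \<psi>1 n u = \<psi>1 T"
    unfolding arch_copula_def T_def using t by (simp add: psi_ext_def)
  also have "\<dots> = psi_ext \<psi>2 (gen_inv \<psi>2 (\<psi>1 T))"
    using psi_ext_gen_inv[OF g2] g1 T0 by (simp add: generator_def)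
  also have "\<dots> \<le> arch_copula \<psi>2 n u"
    unfolding arch_copula_def by (rule psi_ext_antimono[OF g2 _ le]) (auto intro: sum_nonneg gen_inv_nonneg)
  finally show ?thesis .
qed

lemma gronwall_integral_le:
  fixes g :: "real \<Rightarrow> real"
  assumes sT: "s \<le> T" and cont: "continuous_on {s..T} g" and C: "0 \<le> C"
    and le: "\<And>t. t \<in> {s..T} \<Longrightarrow> g t \<le> A + C * integral {s..t} g"
  shows "g T \<le> A * exp (C * (T - s))"
proof -
  define U where "U t = integral {s..t} g" for t
  define Z where "Z t = exp (- C * (t - s)) * (A + C * U t)" for t
  have "continuous_on {s..T} U"
    unfolding U_def by (rule indefinite_integral_continuous_1[OF integrable_continuous_real[OF cont]])
  then have Zcont: "continuous_on {s..T} Z" unfolding Z_def by (intro continuous_intros)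
  have "Z T \<le> Z s"
  proof (rule DERIV_nonpos_imp_decreasing_open[OF sT _ Zcont])
    fix x assume x: "s < x" "x < T"
    have "(U has_vector_derivative g x) (at x within {s..T})"
      unfolding U_def by (rule integral_has_vector_derivative[OF cont]) (use x in auto)
    then have "(U has_real_derivative g x) (at x)"
      using x by (simp add: at_within_Icc_at has_real_derivative_iff_has_vector_derivative)
    then have "(Z has_real_derivative C * exp (- C * (x - s)) * (g x - (A + C * U x))) (at x)"
      unfolding Z_def by (auto intro!: derivative_eq_intros simp: algebra_simps)
    moreover have "C * exp (- C * (x - s)) * (g x - (A + C * U x)) \<le> 0"
      using le[of x] x C unfolding U_def by (auto intro: mult_nonneg_nonpos)
    ultimately show "\<exists>y. (Z has_real_derivative y) (at x) \<and> y \<le> 0" by blast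
  qed
  then have "Z T \<le> A" by (simp add: Z_def U_def)
  then have "exp (C * (T - s)) * Z T \<le> A * exp (C * (T - s))" by (simp add: mult.commute)
  moreover have "exp (C * (T - s)) * Z T = A + C * U T"
    unfolding Z_def by (simp add: mult.assoc[symmetric] exp_add[symmetric])
  ultimately show ?thesis using le[of T] sT unfolding U_def by simp
qed

lemma abs_cont_cdf_nonneg_mono: "abs_cont_cdf_nonneg F f \<Longrightarrow> mono F"
  by (simp add: abs_cont_cdf_nonneg_def)

lemma abs_cont_cdf_nonneg_ge_0:
  assumes "abs_cont_cdf_nonneg F f" shows "0 \<le> F t"
proof -
  have "mono F" and "F (min t (-1)) = 0" using assms by (auto simp: abs_cont_cdf_nonneg_def)
  then show ?thesis by (metis min.cobounded1 monoD)
qed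

lemma abs_cont_cdf_nonneg_le_1:
  assumes "abs_cont_cdf_nonneg F f" shows "F t \<le> 1"
proof -
  have "mono F" and lim: "(F \<longlongrightarrow> 1) at_top" using assms by (auto simp: abs_cont_cdf_nonneg_def)
  then have "eventually (\<lambda>y. F t \<le> F y) at_top"
    unfolding eventually_at_top_linorder by (auto intro: monoD)
  from tendsto_lowerbound[OF lim this] show ?thesis by simp
qed

lemma abs_cont_cdf_nonneg_has_integral:
  assumes F: "abs_cont_cdf_nonneg F f" and xy: "x \<le> y"
  shows "(f has_integral (F y - F x)) {x..y}"
proof -
  have hx: "(f has_integral F x) {..x}" and hy: "(f has_integral F y) {..y}"
    using F by (auto simp: abs_cont_cdf_nonneg_def)
  have "f integrable_on {x..y}"
    by (rule integrable_on_subinterval[of f "{..y}"]) (use hy in auto)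
  then obtain I where I: "(f has_integral I) {x..y}" by auto
  have "{..x} \<inter> {x..y} = {x}" using xy by auto
  then have "negligible ({..x} \<inter> {x..y})" by simp
  from has_integral_Un[OF hx I this] have "(f has_integral (F x + I)) ({..x} \<union> {x..y})" .
  moreover have "{..x} \<union> {x..y} = {..y}" using xy by auto
  ultimately have "(f has_integral (F x + I)) {..y}" by simp
  then have "F y = F x + I" using hy by (rule has_integral_unique[symmetric])
  then show ?thesis using I by simp
qed

lemma abs_cont_cdf_nonneg_continuous_on:
  assumes F: "abs_cont_cdf_nonneg F f" shows "continuous_on {a..b} F"
proof (cases "a \<le> b")
  case True
  have "f integrable_on {a..b}" using abs_cont_cdf_nonneg_has_integral[OF F True] by auto
  then have "continuous_on {a..b} (\<lambda>t. F a + integral {a..t} f)"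
    by (intro continuous_intros indefinite_integral_continuous_1)
  moreover have "F a + integral {a..t} f = F t" if "t \<in> {a..b}" for t
    using abs_cont_cdf_nonneg_has_integral[OF F, of a t] that by (simp add: integral_unique)
  ultimately show ?thesis using continuous_on_eq by blast
qed simp

lemma abs_cont_cdf_nonneg_pos_mono:
  assumes F: "abs_cont_cdf_nonneg F f" and pos: "0 < F a" and ab: "a \<le> b"
  shows "0 < F b"
  using pos monoD[OF abs_cont_cdf_nonneg_mono[OF F] ab] by linarith

lemma rev_hazard_nonneg: "abs_cont_cdf_nonneg F f \<Longrightarrow> 0 \<le> rev_hazard F f t"
  unfolding rev_hazard_def using abs_cont_cdf_nonneg_ge_0[of F f t]
  by (auto simp: abs_cont_cdf_nonneg_def)

lemma density_eq_rev_hazard: "0 < F t \<Longrightarrow> f t = rev_hazard F f t * F t"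
  unfolding rev_hazard_def by simp

lemma density_ge_rev_hazard_bound:
  assumes F: "abs_cont_cdf_nonneg F f" and c: "c \<le> rev_hazard F f t" "0 \<le> c"
  shows "c * F t \<le> f t"
proof (cases "F t > 0")
  case True
  then show ?thesis using c density_eq_rev_hazard[of F t f] by (simp add: mult_right_mono)
next
  case False
  then have "F t = 0" using abs_cont_cdf_nonneg_ge_0[OF F, of t] by simp
  then show ?thesis using F by (simp add: abs_cont_cdf_nonneg_def)
qed

lemma rev_hazard_separating_bound:
  assumes F: "abs_cont_cdf_nonneg F f" and G: "abs_cont_cdf_nonneg G g"
    and rGF: "\<forall>x>0. rev_hazard G g x \<le> rev_hazard F f x"
    and dec: "antimono_on {0<..} (rev_hazard F f) \<or> antimono_on {0<..} (rev_hazard G g)"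
    and s: "0 < s1" "s1 \<le> s2" "s2 \<le> s3"
  obtains c where "0 \<le> c" "\<And>\<tau>. \<tau> \<in> {s1..s2} \<Longrightarrow> c \<le> rev_hazard F f \<tau>"
    "\<And>\<tau>. \<tau> \<in> {s3..s4} \<Longrightarrow> rev_hazard G g \<tau> \<le> c"
  using dec
proof
  assume d: "antimono_on {0<..} (rev_hazard F f)"
  show thesis
  proof (rule that[of "rev_hazard F f s2"])
    show "0 \<le> rev_hazard F f s2" by (rule rev_hazard_nonneg[OF F])
    show "rev_hazard F f s2 \<le> rev_hazard F f \<tau>" if "\<tau> \<in> {s1..s2}" for \<tau>
      using s that by (intro monotone_onD[OF d]) auto
    show "rev_hazard G g \<tau> \<le> rev_hazard F f s2" if "\<tau> \<in> {s3..s4}" for \<tau>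
    proof -
      have "rev_hazard F f \<tau> \<le> rev_hazard F f s2"
        using s that by (intro monotone_onD[OF d]) auto
      moreover have "rev_hazard G g \<tau> \<le> rev_hazard F f \<tau>" using rGF s that by simp
      ultimately show ?thesis by simp
    qed
  qed
next
  assume d: "antimono_on {0<..} (rev_hazard G g)"
  show thesis
  proof (rule that[of "rev_hazard G g s2"])
    show "0 \<le> rev_hazard G g s2" by (rule rev_hazard_nonneg[OF G])
    show "rev_hazard G g s2 \<le> rev_hazard F f \<tau>" if "\<tau> \<in> {s1..s2}" for \<tau>
    proof -
      have "rev_hazard G g s2 \<le> rev_hazard G g \<tau>"
        using s that by (intro monotone_onD[OF d]) auto
      moreover have "rev_hazard G g \<tau> \<le> rev_hazard F f \<tau>" using rGF s that by simp
      ultimately show ?thesis by simp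
    qed
    show "rev_hazard G g \<tau> \<le> rev_hazard G g s2" if "\<tau> \<in> {s3..s4}" for \<tau>
      using s that by (intro monotone_onD[OF d]) auto
  qed
qed

lemma ln_cdf_increment_ge:
  assumes F: "abs_cont_cdf_nonneg F f" and sT: "s \<le> T" and Fs: "0 < F s" and c: "0 \<le> c"
    and r: "\<And>\<tau>. \<tau> \<in> {s..T} \<Longrightarrow> c \<le> rev_hazard F f \<tau>"
  shows "c * (T - s) \<le> ln (F T) - ln (F s)"
proof -
  have "- F T \<le> - F s * exp (c * (T - s))"
  proof (rule gronwall_integral_le[OF sT _ c, where g = "\<lambda>t. - F t"])
    show "continuous_on {s..T} (\<lambda>t. - F t)"
      by (intro continuous_intros abs_cont_cdf_nonneg_continuous_on[OF F])
    fix t assume t: "t \<in> {s..T}"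
    have "((\<lambda>\<tau>. c * F \<tau>) has_integral (c * integral {s..t} F)) {s..t}"
      by (intro has_integral_mult_right integrable_integral integrable_continuous_real
          abs_cont_cdf_nonneg_continuous_on[OF F])
    moreover have "(f has_integral (F t - F s)) {s..t}"
      using abs_cont_cdf_nonneg_has_integral[OF F] t by simp
    ultimately have "c * integral {s..t} F \<le> F t - F s"
      by (rule has_integral_le) (use r t density_ge_rev_hazard_bound[OF F _ c] in simp)
    then show "- F t \<le> - F s + c * integral {s..t} (\<lambda>t. - F t)" by simp
  qed
  then have "ln (F s * exp (c * (T - s))) \<le> ln (F T)" using Fs by (intro ln_mono) auto
  then show ?thesis using Fs by (simp add: ln_mult)
qed

lemma ln_cdf_increment_le:
  assumes F: "abs_cont_cdf_nonneg F f" and sT: "s \<le> T" and Fs: "0 < F s" and c: "0 \<le> c"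
    and r: "\<And>\<tau>. \<tau> \<in> {s..T} \<Longrightarrow> rev_hazard F f \<tau> \<le> c"
  shows "ln (F T) - ln (F s) \<le> c * (T - s)"
proof -
  have mono: "F s \<le> F \<tau>" if "\<tau> \<in> {s..T}" for \<tau>
    using that abs_cont_cdf_nonneg_mono[OF F] by (auto intro: monoD)
  have "F T \<le> F s * exp (c * (T - s))"
  proof (rule gronwall_integral_le[OF sT abs_cont_cdf_nonneg_continuous_on[OF F] c])
    fix t assume t: "t \<in> {s..T}"
    have "(f has_integral (F t - F s)) {s..t}"
      using abs_cont_cdf_nonneg_has_integral[OF F] t by simp
    moreover have "((\<lambda>\<tau>. c * F \<tau>) has_integral (c * integral {s..t} F)) {s..t}"
      by (intro has_integral_mult_right integrable_integral integrable_continuous_real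
          abs_cont_cdf_nonneg_continuous_on[OF F])
    moreover have "f \<tau> \<le> c * F \<tau>" if "\<tau> \<in> {s..t}" for \<tau>
    proof -
      have "0 < F \<tau>" using mono[of \<tau>] that t Fs by simp
      then show ?thesis
        using density_eq_rev_hazard[of F \<tau> f] r[of \<tau>] that t by (simp add: mult_right_mono)
    qed
    ultimately have "F t - F s \<le> c * integral {s..t} F" by (rule has_integral_le)
    then show "F t \<le> F s + c * integral {s..t} F" by simp
  qed
  then have "ln (F T) \<le> ln (F s * exp (c * (T - s)))"
    using Fs mono[of T] sT by (intro ln_mono) auto
  then show ?thesis using Fs by (simp add: ln_mult)
qed

lemma cross_density_ge_rev_hazard:
  assumes F: "abs_cont_cdf_nonneg F f" and G: "abs_cont_cdf_nonneg G g"
    and Gt0: "0 < G t0" and G_le: "G t0 \<le> G \<tau>"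
    and rGF: "rev_hazard G g \<tau> \<le> rev_hazard F f \<tau>"
  shows "rev_hazard G g \<tau> * (F \<tau> * G t0 - F t0 * G \<tau>) \<le> f \<tau> * G t0 - F t0 * g \<tau>"
proof -
  let ?r = "rev_hazard G g \<tau>"
  have "g \<tau> = ?r * G \<tau>" using Gt0 G_le by (intro density_eq_rev_hazard) simp
  moreover have "?r * F \<tau> \<le> f \<tau>"
    by (rule density_ge_rev_hazard_bound[OF F rGF rev_hazard_nonneg[OF G]])
  then have "?r * F \<tau> * G t0 \<le> f \<tau> * G t0" using Gt0 by (simp add: mult_right_mono)
  ultimately show ?thesis by (simp add: algebra_simps)
qed

text \<open>\<open>E = F \<cdot> G(t\<^sub>0) - F(t\<^sub>0) \<cdot> G\<close> vanishes at \<open>t\<^sub>0\<close> and has slope at least \<open>r\<^sub>G E\<close>, so its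
  negative part \<open>m\<close> satisfies a Gronwall inequality with constant term \<open>0\<close>.\<close>
lemma cdf_ratio_mono:
  assumes F: "abs_cont_cdf_nonneg F f" and G: "abs_cont_cdf_nonneg G g"
    and T: "t0 \<le> T" and Gt0: "0 < G t0" and C: "0 \<le> C"
    and rGF: "\<And>\<tau>. \<tau> \<in> {t0..T} \<Longrightarrow> rev_hazard G g \<tau> \<le> rev_hazard F f \<tau>"
    and rC: "\<And>\<tau>. \<tau> \<in> {t0..T} \<Longrightarrow> rev_hazard G g \<tau> \<le> C"
  shows "F t0 * G T \<le> F T * G t0"
proof -
  define E where "E t = F t * G t0 - F t0 * G t" for t
  define m where "m t = max 0 (- E t)" for t
  have mcont: "continuous_on {t0..t} m" for t
    unfolding m_def E_def
    by (intro continuous_intros abs_cont_cdf_nonneg_continuous_on[OF F]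
        abs_cont_cdf_nonneg_continuous_on[OF G])
  have E_slope: "- C * m \<tau> \<le> f \<tau> * G t0 - F t0 * g \<tau>" if \<tau>: "\<tau> \<in> {t0..T}" for \<tau>
  proof -
    let ?r = "rev_hazard G g \<tau>"
    have "G t0 \<le> G \<tau>" using \<tau> abs_cont_cdf_nonneg_mono[OF G] by (auto intro: monoD)
    then have "?r * E \<tau> \<le> f \<tau> * G t0 - F t0 * g \<tau>"
      unfolding E_def by (rule cross_density_ge_rev_hazard[OF F G Gt0 _ rGF[OF \<tau>]])
    moreover have "- C * m \<tau> \<le> ?r * E \<tau>"
      using rC[OF \<tau>] rev_hazard_nonneg[OF G, of \<tau>] unfolding m_def
      by (cases "0 \<le> E \<tau>") (simp, simp add: mult_right_mono_neg)
    ultimately show ?thesis by linarith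
  qed
  have "m T \<le> 0 * exp (C * (T - t0))"
  proof (rule gronwall_integral_le[OF T mcont C])
    fix t assume t: "t \<in> {t0..T}"
    have "((\<lambda>\<tau>. - C * m \<tau>) has_integral (- C * integral {t0..t} m)) {t0..t}"
      by (intro has_integral_mult_right integrable_integral integrable_continuous_real mcont)
    moreover have "((\<lambda>\<tau>. f \<tau> * G t0 - F t0 * g \<tau>) has_integral
        ((F t - F t0) * G t0 - F t0 * (G t - G t0))) {t0..t}"
      using t by (intro has_integral_diff has_integral_mult_left has_integral_mult_right
          abs_cont_cdf_nonneg_has_integral[OF F] abs_cont_cdf_nonneg_has_integral[OF G]) auto
    ultimately have "- C * integral {t0..t} m \<le> (F t - F t0) * G t0 - F t0 * (G t - G t0)"
      by (rule has_integral_le) (use E_slope t in auto)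
    moreover have "0 \<le> C * integral {t0..t} m"
      using C by (intro mult_nonneg_nonneg integral_nonneg integrable_continuous_real mcont)
        (auto simp: m_def)
    ultimately show "m t \<le> 0 + C * integral {t0..t} m"
      unfolding m_def E_def by (simp add: algebra_simps)
  qed
  then show ?thesis unfolding m_def E_def by simp
qed

text \<open>The monotonicity of one reversed hazard rate only serves to bound the other one on compact
  intervals, which the Gronwall argument needs.\<close>
lemma cdf_le_of_rev_hazard_le_pos:
  assumes F: "abs_cont_cdf_nonneg F f" and G: "abs_cont_cdf_nonneg G g"
    and rGF: "\<forall>x>0. rev_hazard G g x \<le> rev_hazard F f x"
    and dec: "antimono_on {0<..} (rev_hazard F f) \<or> antimono_on {0<..} (rev_hazard G g)"
    and t0: "0 < t0" and Gt0: "0 < G t0"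
  shows "F t0 \<le> G t0"
proof -
  have "F t0 * G T \<le> F T * G t0" if T: "t0 \<le> T" for T
  proof -
    obtain C where C: "0 \<le> C" and rC: "\<And>\<tau>. \<tau> \<in> {t0..T} \<Longrightarrow> rev_hazard G g \<tau> \<le> C"
      using rev_hazard_separating_bound[OF F G rGF dec t0 order_refl order_refl] by blast
    show ?thesis by (rule cdf_ratio_mono[OF F G T Gt0 C _ rC]) (use rGF t0 in auto)
  qed
  then have ev: "eventually (\<lambda>T. F t0 * G T \<le> F T * G t0) at_top"
    unfolding eventually_at_top_linorder by blast
  have lF: "(F \<longlongrightarrow> 1) at_top" and lG: "(G \<longlongrightarrow> 1) at_top"
    using F G by (simp_all add: abs_cont_cdf_nonneg_def)
  show ?thesis
    using tendsto_le[OF trivial_limit_at_top_linorder tendsto_mult_right[OF lF]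
        tendsto_mult_left[OF lG] ev] by simp
qed

text \<open>Where \<open>G\<close> vanishes, compare instead at a later point where \<open>G\<close> is positive but below \<open>F\<close>.\<close>
lemma cdf_le_of_rev_hazard_le:
  assumes F: "abs_cont_cdf_nonneg F f" and G: "abs_cont_cdf_nonneg G g"
    and rGF: "\<forall>x>0. rev_hazard G g x \<le> rev_hazard F f x"
    and dec: "antimono_on {0<..} (rev_hazard F f) \<or> antimono_on {0<..} (rev_hazard G g)"
    and t: "0 < t"
  shows "F t \<le> G t"
proof (cases "G t > 0")
  case True
  then show ?thesis using cdf_le_of_rev_hazard_le_pos[OF F G rGF dec t] by simp
next
  case False
  then have G0: "G t = 0" using abs_cont_cdf_nonneg_ge_0[OF G, of t] by simp
  show ?thesis
  proof (rule ccontr)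
    assume "\<not> F t \<le> G t"
    then have Ft: "0 < F t" using G0 by simp
    have "(G \<longlongrightarrow> 1) at_top" using G by (simp add: abs_cont_cdf_nonneg_def)
    then have "eventually (\<lambda>x. F t / 2 < G x) at_top"
      using abs_cont_cdf_nonneg_le_1[OF F, of t] by (intro order_tendstoD) auto
    then obtain T where T: "t \<le> T" "F t / 2 < G T"
      unfolding eventually_at_top_linorder by (meson nle_le)
    obtain t1 where t1: "t \<le> t1" "t1 \<le> T" "G t1 = F t / 2"
      using IVT'[of G t "F t / 2" T, OF _ _ _ abs_cont_cdf_nonneg_continuous_on[OF G]] G0 Ft T
      by auto
    have "F t \<le> F t1" using t1 abs_cont_cdf_nonneg_mono[OF F] by (auto intro: monoD)
    also have "\<dots> \<le> G t1" using cdf_le_of_rev_hazard_le_pos[OF F G rGF dec] t t1 Ft by simp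
    finally show False using t1 Ft by simp
  qed
qed

definition gen_inv_exp :: "(real \<Rightarrow> real) \<Rightarrow> real \<Rightarrow> real" where
  "gen_inv_exp \<psi> y = real_of_ereal (gen_inv \<psi> (exp (- y)))"

lemma gen_inv_exp_least:
  assumes g: "generator \<psi>" and y: "0 \<le> y"
  shows "gen_inv \<psi> (exp (- y)) = ereal (gen_inv_exp \<psi> y)" "0 \<le> gen_inv_exp \<psi> y"
    "\<psi> (gen_inv_exp \<psi> y) = exp (- y)"
    "\<And>x. 0 \<le> x \<Longrightarrow> \<psi> x \<le> exp (- y) \<Longrightarrow> gen_inv_exp \<psi> y \<le> x"
proof -
  obtain t where "0 \<le> t" "gen_inv \<psi> (exp (- y)) = ereal t" "\<psi> t = exp (- y)"
    "\<And>x. 0 \<le> x \<Longrightarrow> \<psi> x \<le> exp (- y) \<Longrightarrow> t \<le> x"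
    using gen_inv_eq_least_pos[OF g, of "exp (- y)"] y by auto
  moreover from this have "gen_inv_exp \<psi> y = t" unfolding gen_inv_exp_def by simp
  ultimately show "gen_inv \<psi> (exp (- y)) = ereal (gen_inv_exp \<psi> y)" "0 \<le> gen_inv_exp \<psi> y"
    "\<psi> (gen_inv_exp \<psi> y) = exp (- y)"
    "\<And>x. 0 \<le> x \<Longrightarrow> \<psi> x \<le> exp (- y) \<Longrightarrow> gen_inv_exp \<psi> y \<le> x" by auto
qed

lemma mono_on_gen_inv_exp:
  assumes g: "generator \<psi>" shows "mono_on {0..} (gen_inv_exp \<psi>)"
proof (rule mono_onI)
  fix y y' :: real assume y: "y \<in> {0..}" "y' \<in> {0..}" "y \<le> y'"
  have "gen_inv \<psi> (exp (- y)) \<le> gen_inv \<psi> (exp (- y'))"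
    by (rule gen_inv_antimono) (use y in simp)
  then show "gen_inv_exp \<psi> y \<le> gen_inv_exp \<psi> y'" using gen_inv_exp_least(1)[OF g] y by simp
qed

lemma convex_on_gen_inv_exp:
  assumes g: "generator \<psi>" and lc: "log_convex_on {0..} \<psi>"
  shows "convex_on {0..} (gen_inv_exp \<psi>)"
proof (rule convex_onI)
  fix t y1 y2 :: real assume t: "0 < t" "t < 1" and y: "y1 \<in> {0..}" "y2 \<in> {0..}"
  define x1 x2 where "x1 = gen_inv_exp \<psi> y1" and "x2 = gen_inv_exp \<psi> y2"
  define z where "z = (1 - t) * x1 + t * x2"
  have x0: "0 \<le> x1" "0 \<le> x2" and px: "\<psi> x1 = exp (- y1)" "\<psi> x2 = exp (- y2)"
    using gen_inv_exp_least[OF g] y unfolding x1_def x2_def by auto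
  have pos: "\<forall>x\<in>{0..}. 0 < \<psi> x" and cv: "convex_on {0..} (\<lambda>x. ln (\<psi> x))"
    using lc by (auto simp: log_convex_on_def)
  have z0: "0 \<le> z" unfolding z_def using x0 t by simp
  have "ln (\<psi> z) \<le> (1 - t) * ln (\<psi> x1) + t * ln (\<psi> x2)"
    using convex_onD[OF cv, of t x1 x2] t x0 unfolding z_def by simp
  also have "\<dots> = - ((1 - t) * y1 + t * y2)" using px by simp
  finally have "exp (ln (\<psi> z)) \<le> exp (- ((1 - t) * y1 + t * y2))" by simp
  then have "\<psi> z \<le> exp (- ((1 - t) * y1 + t * y2))" using pos z0 by simp
  moreover have "0 \<le> (1 - t) * y1 + t * y2" using y t by simp
  ultimately have "gen_inv_exp \<psi> ((1 - t) * y1 + t * y2) \<le> z"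
    using gen_inv_exp_least(4)[OF g _ z0] by blast
  then show "gen_inv_exp \<psi> ((1 - t) *\<^sub>R y1 + t *\<^sub>R y2)
      \<le> (1 - t) * gen_inv_exp \<psi> y1 + t * gen_inv_exp \<psi> y2"
    unfolding z_def x1_def x2_def by simp
qed (rule convex_real_interval)

lemma gen_inv_zero_if_log_convex: "log_convex_on {0..} \<psi> \<Longrightarrow> gen_inv \<psi> 0 = \<infinity>"
proof -
  assume "log_convex_on {0..} \<psi>"
  then have "{x. 0 \<le> x \<and> \<psi> x \<le> 0} = {}" by (force simp: log_convex_on_def)
  then show "gen_inv \<psi> 0 = \<infinity>" unfolding gen_inv_def by (simp only:) (simp add: top_ereal_def)
qed

lemma convex_mono_chord_le:
  fixes k :: "real \<Rightarrow> real"
  assumes cv: "convex_on {0..} k" and mo: "mono_on {0..} k"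
    and y: "0 \<le> y4" "y4 \<le> y3" "y3 \<le> y2" "y2 \<le> y1" and n: "0 < a" "0 < b"
    and d: "b * (y3 - y4) \<le> a * (y1 - y2)"
  shows "b * (k y3 - k y4) \<le> a * (k y1 - k y2)"
proof (cases "y3 = y4")
  case True
  have "k y2 \<le> k y1" using mo y by (auto intro: mono_onD)
  then show ?thesis using True n by simp
next
  case False
  then have y43: "y4 < y3" using y by simp
  then have "0 < b * (y3 - y4)" using n by simp
  then have "0 < a * (y1 - y2)" using d by linarith
  then have y21: "y2 < y1" using n by (simp add: zero_less_mult_iff)
  define s2 s1 where "s2 = (k y3 - k y4) / (y3 - y4)" and "s1 = (k y1 - k y2) / (y1 - y2)"
  have "(k y4 - k y3) / (y4 - y3) \<le> (k y4 - k y1) / (y4 - y1)"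
    by (rule convex_on_slope_le(1)[OF cv]) (use y y43 y21 in auto)
  also have "\<dots> \<le> (k y2 - k y1) / (y2 - y1)"
    by (rule convex_on_slope_le(2)[OF cv]) (use y y43 y21 in auto)
  finally have s12: "s2 \<le> s1" unfolding s1_def s2_def by (metis minus_diff_eq minus_divide_divide)
  have "k y4 \<le> k y3" using mo y by (auto intro: mono_onD)
  then have s20: "0 \<le> s2" unfolding s2_def using y43 by simp
  have "b * (k y3 - k y4) = b * (y3 - y4) * s2" unfolding s2_def using y43 by simp
  also have "\<dots> \<le> a * (y1 - y2) * s2" using d s20 by (rule mult_right_mono)
  also have "\<dots> \<le> a * (y1 - y2) * s1" using s12 n y21 by (intro mult_left_mono) auto
  also have "\<dots> = a * (k y1 - k y2)" unfolding s1_def using y21 by simp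
  finally show ?thesis .
qed

text \<open>Moving \<open>s\<^sub>1\<close> up to \<open>s\<^sub>2\<close> and \<open>s\<^sub>4\<close> down to \<open>s\<^sub>3\<close> by amounts balanced by the weights
  \<open>a\<close>, \<open>b\<close>: a constant \<open>c\<close> separating the reversed hazard rates on the two intervals gives, via
  Gronwall, \<open>-ln F\<close> a drop of at least \<open>c(s\<^sub>2 - s\<^sub>1)\<close> and \<open>-ln G\<close> a rise of at most
  \<open>c(s\<^sub>4 - s\<^sub>3)\<close>; convexity of \<open>k\<close> carries the comparison through \<open>k\<close>.\<close>
lemma transfer_neg_ln_cdf_le:
  fixes k :: "real \<Rightarrow> real"
  assumes F: "abs_cont_cdf_nonneg F f" and G: "abs_cont_cdf_nonneg G g"
    and rGF: "\<forall>x>0. rev_hazard G g x \<le> rev_hazard F f x"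
    and dec: "antimono_on {0<..} (rev_hazard F f) \<or> antimono_on {0<..} (rev_hazard G g)"
    and cv: "convex_on {0..} k" and mo: "mono_on {0..} k" and ab: "0 < a" "0 < b"
    and s: "0 < s1" "s1 \<le> s2" "s2 \<le> s3" "s3 \<le> s4"
    and balanced: "a * (s2 - s1) = b * (s4 - s3)"
    and Fs1: "0 < F s1"
  shows "a * k (- ln (F s2)) + b * k (- ln (G s3)) \<le> a * k (- ln (F s1)) + b * k (- ln (G s4))"
proof -
  obtain c where c: "0 \<le> c" and cF: "\<And>\<tau>. \<tau> \<in> {s1..s2} \<Longrightarrow> c \<le> rev_hazard F f \<tau>"
    and cG: "\<And>\<tau>. \<tau> \<in> {s3..s4} \<Longrightarrow> rev_hazard G g \<tau> \<le> c"
    using rev_hazard_separating_bound[OF F G rGF dec s(1-3)] by blast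
  have F_le: "F s1 \<le> F s2" "F s2 \<le> F s3" and G_le: "G s3 \<le> G s4"
    using s abs_cont_cdf_nonneg_mono[OF F] abs_cont_cdf_nonneg_mono[OF G] by (auto intro: monoD)
  moreover have FG: "F s3 \<le> G s3" using cdf_le_of_rev_hazard_le[OF F G rGF dec] s by simp
  ultimately have pos: "0 < F s2" "0 < G s3" using Fs1 by linarith+
  have "b * (ln (G s4) - ln (G s3)) \<le> b * (c * (s4 - s3))"
    using ln_cdf_increment_le[OF G s(4) pos(2) c cG] ab by simp
  also have "\<dots> = c * (a * (s2 - s1))" using balanced by simp
  also have "\<dots> \<le> a * (ln (F s2) - ln (F s1))"
    using ln_cdf_increment_ge[OF F s(2) Fs1 c cF] ab by (simp add: mult.left_commute)
  finally have d: "b * (- ln (G s3) - - ln (G s4)) \<le> a * (- ln (F s1) - - ln (F s2))" by simp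
  have "0 \<le> - ln (G s4)" using abs_cont_cdf_nonneg_le_1[OF G] pos G_le by simp
  moreover have "- ln (G s4) \<le> - ln (G s3)" using pos G_le by simp
  moreover have "- ln (G s3) \<le> - ln (F s2)" using pos F_le FG by simp
  moreover have "- ln (F s2) \<le> - ln (F s1)" using Fs1 F_le by simp
  ultimately have "b * (k (- ln (G s3)) - k (- ln (G s4))) \<le> a * (k (- ln (F s1)) - k (- ln (F s2)))"
    by (rule convex_mono_chord_le[OF cv mo _ _ _ _ ab d])
  then show ?thesis by (simp add: algebra_simps)
qed

lemma mono_comp_neg_ln_cdf:
  fixes k :: "real \<Rightarrow> real"
  assumes F: "abs_cont_cdf_nonneg F f" and mo: "mono_on {0..} k" and p: "0 < F p" and pq: "p \<le> q"
  shows "k (- ln (F q)) \<le> k (- ln (F p))"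
proof -
  have "F p \<le> F q" using abs_cont_cdf_nonneg_mono[OF F] pq by (rule monoD)
  moreover have "F q \<le> 1" by (rule abs_cont_cdf_nonneg_le_1[OF F])
  ultimately show ?thesis using p by (auto intro: mono_onD[OF mo])
qed

text \<open>Starting from \<open>(l\<^sub>A, l\<^sub>B)\<close>, a point below \<open>(m\<^sub>A, m\<^sub>B)\<close> is reached by moving the two
  coordinates towards each other at constant weighted sum; its first coordinate is \<open>min m\<^sub>A c\<close>
  with \<open>c\<close> the weighted mean of \<open>l\<^sub>A, l\<^sub>B\<close>.\<close>
lemma balanced_point_exists:
  fixes a b lA lB mA mB :: real
  assumes ab: "0 < a" "0 < b" and l: "lA \<le> lB" and m: "lA \<le> mA" "mA \<le> mB" "mB < lB"
    and tot: "a * lA + b * lB \<le> a * mA + b * mB"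
  obtains p q where "lA \<le> p" "p \<le> q" "q \<le> lB" "p \<le> mA" "q \<le> mB" "a * (p - lA) = b * (lB - q)"
proof -
  define c where "c = (a * lA + b * lB) / (a + b)"
  define p where "p = min mA c"
  define q where "q = lB - a * (p - lA) / b"
  have c: "(a + b) * c = a * lA + b * lB" unfolding c_def using ab by simp
  have pq_sum: "a * p + b * q = a * lA + b * lB" and balanced: "a * (p - lA) = b * (lB - q)"
    unfolding q_def using ab by (simp_all add: field_simps)
  have "(a + b) * lA \<le> (a + b) * c" unfolding c using l ab by (simp add: distrib_right)
  then have "lA \<le> c" using ab by simp
  then have lp: "lA \<le> p" unfolding p_def using m by simp
  have "(a + b) * p \<le> (a + b) * c" unfolding p_def using ab by (intro mult_left_mono) auto
  then have "b * p \<le> b * q" using pq_sum c by (simp add: algebra_simps)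
  then have "p \<le> q" using ab by simp
  moreover have "0 \<le> a * (p - lA)" using lp ab by simp
  then have "0 \<le> b * (lB - q)" using balanced by simp
  then have "q \<le> lB" using ab by (simp add: zero_le_mult_iff)
  moreover have "q \<le> mB"
  proof (cases "mA \<le> c")
    case True
    then have "b * q \<le> b * mB" using pq_sum tot unfolding p_def by simp
    then show ?thesis using ab by simp
  next
    case False
    then have "a * c + b * q = (a + b) * c" using pq_sum c unfolding p_def by simp
    then have "b * q = b * c" by (simp add: distrib_right)
    then show ?thesis using False m ab by simp
  qed
  moreover have "p \<le> mA" unfolding p_def by simp
  ultimately show thesis using that lp balanced by blast
qed

lemma weighted_neg_ln_cdf_antimono:
  fixes k :: "real \<Rightarrow> real"
  assumes F: "abs_cont_cdf_nonneg F f" and G: "abs_cont_cdf_nonneg G g"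
    and rGF: "\<forall>x>0. rev_hazard G g x \<le> rev_hazard F f x"
    and dec: "antimono_on {0<..} (rev_hazard F f) \<or> antimono_on {0<..} (rev_hazard G g)"
    and mo: "mono_on {0..} k" and ab: "0 < a" "0 < b"
    and x: "0 < x" and l: "0 < l" and Fl: "0 < F (l * x)"
    and pq: "l \<le> p" "p \<le> p'" "l \<le> q" "q \<le> q'"
  shows "a * k (- ln (F (p' * x))) + b * k (- ln (G (q' * x)))
         \<le> a * k (- ln (F (p * x))) + b * k (- ln (G (q * x)))"
proof -
  have Fp: "0 < F (p * x)" and "0 < F (q * x)"
    using abs_cont_cdf_nonneg_pos_mono[OF F Fl] pq x by (simp_all add: mult_right_mono)
  moreover have "F (q * x) \<le> G (q * x)" using cdf_le_of_rev_hazard_le[OF F G rGF dec] pq l x by simp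
  ultimately have Gq: "0 < G (q * x)" by linarith
  have "k (- ln (F (p' * x))) \<le> k (- ln (F (p * x)))"
    by (rule mono_comp_neg_ln_cdf[OF F mo Fp]) (use pq x in \<open>simp add: mult_right_mono\<close>)
  moreover have "k (- ln (G (q' * x))) \<le> k (- ln (G (q * x)))"
    by (rule mono_comp_neg_ln_cdf[OF G mo Gq]) (use pq x in \<open>simp add: mult_right_mono\<close>)
  ultimately show ?thesis using ab by (intro add_mono mult_left_mono) auto
qed

lemma weighted_neg_ln_cdf_le:
  fixes k :: "real \<Rightarrow> real"
  assumes F: "abs_cont_cdf_nonneg F f" and G: "abs_cont_cdf_nonneg G g"
    and rGF: "\<forall>x>0. rev_hazard G g x \<le> rev_hazard F f x"
    and dec: "antimono_on {0<..} (rev_hazard F f) \<or> antimono_on {0<..} (rev_hazard G g)"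
    and cv: "convex_on {0..} k" and mo: "mono_on {0..} k" and ab: "0 < a" "0 < b"
    and x: "0 < x" and l: "0 < lA" "lA \<le> lB" and m: "lA \<le> mA" "mA \<le> mB"
    and tot: "a * lA + b * lB \<le> a * mA + b * mB"
    and FlA: "0 < F (lA * x)"
  shows "a * k (- ln (F (mA * x))) + b * k (- ln (G (mB * x)))
         \<le> a * k (- ln (F (lA * x))) + b * k (- ln (G (lB * x)))"
proof -
  define \<Phi> where "\<Phi> p q = a * k (- ln (F (p * x))) + b * k (- ln (G (q * x)))" for p q
  note \<Phi>_antimono = weighted_neg_ln_cdf_antimono[OF F G rGF dec mo ab x l(1) FlA, folded \<Phi>_def]
  show ?thesis
  proof (cases "lB \<le> mB")
    case True
    then show ?thesis using \<Phi>_antimono[of lA mA lB mB] l m unfolding \<Phi>_def by simp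
  next
    case False
    then obtain p q where pq: "lA \<le> p" "p \<le> q" "q \<le> lB" "p \<le> mA" "q \<le> mB"
      and balanced: "a * (p - lA) = b * (lB - q)"
      using balanced_point_exists[OF ab l(2) m _ tot] by auto
    have "\<Phi> p q \<le> \<Phi> lA lB"
      unfolding \<Phi>_def
    proof (rule transfer_neg_ln_cdf_le[OF F G rGF dec cv mo ab _ _ _ _ _ FlA])
      have "a * (p * x - lA * x) = a * (p - lA) * x" by (simp add: algebra_simps)
      also have "\<dots> = b * (lB - q) * x" using balanced by simp
      also have "\<dots> = b * (lB * x - q * x)" by (simp add: algebra_simps)
      finally show "a * (p * x - lA * x) = b * (lB * x - q * x)" .
    qed (use pq l x in \<open>simp_all add: mult_right_mono\<close>)
    moreover have "\<Phi> mA mB \<le> \<Phi> p q" using \<Phi>_antimono pq by simp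
    ultimately show ?thesis unfolding \<Phi>_def by simp
  qed
qed

definition arch_copula2 :: "(real \<Rightarrow> real) \<Rightarrow> nat \<Rightarrow> nat \<Rightarrow> real \<Rightarrow> real \<Rightarrow> real" where
  "arch_copula2 \<psi> n1 n2 u1 u2 =
     (if gen_inv \<psi> u1 = \<infinity> \<or> gen_inv \<psi> u2 = \<infinity> then 0
      else \<psi> (real n1 * real_of_ereal (gen_inv \<psi> u1) + real n2 * real_of_ereal (gen_inv \<psi> u2)))"

lemma arch_copula2_swap: "arch_copula2 \<psi> n1 n2 u1 u2 = arch_copula2 \<psi> n2 n1 u2 u1"
  unfolding arch_copula2_def by (auto simp: add.commute)

lemma arch_copula2_nonneg:
  assumes g: "generator \<psi>" shows "0 \<le> arch_copula2 \<psi> n1 n2 u1 u2"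
proof -
  have "0 \<le> real n1 * real_of_ereal (gen_inv \<psi> u1) + real n2 * real_of_ereal (gen_inv \<psi> u2)"
    by (simp add: real_of_ereal_pos gen_inv_nonneg)
  then show ?thesis using g unfolding arch_copula2_def generator_def by simp
qed

lemma sum_lessThan_two_values:
  "(\<Sum>i<n1 + n2. if i < n1 then a else b) = of_nat n1 * a + of_nat n2 * (b :: 'a :: comm_semiring_1)"
  by (induction n2) (simp_all add: algebra_simps)

lemma arch_copula_two_values:
  assumes n: "0 < n1" "0 < n2"
  shows "arch_copula \<psi> (n1 + n2) (\<lambda>i. if i < n1 then u1 else u2) = arch_copula2 \<psi> n1 n2 u1 u2"
proof (cases "gen_inv \<psi> u1 = \<infinity> \<or> gen_inv \<psi> u2 = \<infinity>")
  case True
  have "\<exists>i<n1 + n2. gen_inv \<psi> (if i < n1 then u1 else u2) = \<infinity>"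
  proof (cases "gen_inv \<psi> u1 = \<infinity>")
    case True
    then show ?thesis using n by (intro exI[of _ 0]) auto
  next
    case False
    then show ?thesis using \<open>gen_inv \<psi> u1 = \<infinity> \<or> gen_inv \<psi> u2 = \<infinity>\<close> n
      by (intro exI[of _ n1]) auto
  qed
  then have "(\<Sum>i<n1 + n2. gen_inv \<psi> (if i < n1 then u1 else u2)) = \<infinity>"
    unfolding sum_Pinfty by blast
  then show ?thesis using True unfolding arch_copula_def arch_copula2_def psi_ext_def by simp
next
  case False
  have real: "gen_inv \<psi> u = ereal (real_of_ereal (gen_inv \<psi> u))" if "gen_inv \<psi> u \<noteq> \<infinity>" for u
    using that gen_inv_nonneg[of \<psi> u] by (cases "gen_inv \<psi> u") auto
  obtain t1 t2 where t: "gen_inv \<psi> u1 = ereal t1" "gen_inv \<psi> u2 = ereal t2"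
    using real False by blast
  have "(\<Sum>i<n1 + n2. gen_inv \<psi> (if i < n1 then u1 else u2))
      = ereal (\<Sum>i<n1 + n2. if i < n1 then t1 else t2)"
    unfolding sum_ereal[symmetric] using t by (intro sum.cong) auto
  then show ?thesis
    unfolding arch_copula_def arch_copula2_def psi_ext_def sum_lessThan_two_values using t by simp
qed

lemma arch_copula2_pos:
  assumes g: "generator \<psi>" and u: "0 < u1" "u1 \<le> 1" "0 < u2" "u2 \<le> 1"
  shows "arch_copula2 \<psi> n1 n2 u1 u2
    = \<psi> (real n1 * gen_inv_exp \<psi> (- ln u1) + real n2 * gen_inv_exp \<psi> (- ln u2))"
proof -
  have "gen_inv \<psi> u = ereal (gen_inv_exp \<psi> (- ln u))" if "0 < u" "u \<le> 1" for u
    using gen_inv_exp_least(1)[OF g, of "- ln u"] that by simp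
  then show ?thesis using u unfolding arch_copula2_def by simp
qed

lemma arch_copula2_scale_le:
  fixes nA nB :: nat
  assumes g: "generator \<psi>" and lc: "log_convex_on {0..} \<psi>"
    and F: "abs_cont_cdf_nonneg F f" and G: "abs_cont_cdf_nonneg G g"
    and rGF: "\<forall>x>0. rev_hazard G g x \<le> rev_hazard F f x"
    and dec: "antimono_on {0<..} (rev_hazard F f) \<or> antimono_on {0<..} (rev_hazard G g)"
    and n: "0 < nA" "0 < nB" and x: "0 < x"
    and l: "0 < lA" "lA \<le> lB" and m: "lA \<le> mA" "mA \<le> mB"
    and tot: "real nA * lA + real nB * lB \<le> real nA * mA + real nB * mB"
  shows "arch_copula2 \<psi> nA nB (F (lA * x)) (G (lB * x))
    \<le> arch_copula2 \<psi> nA nB (F (mA * x)) (G (mB * x))"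
proof (cases "F (lA * x) = 0 \<or> G (lB * x) = 0")
  case True
  then have "arch_copula2 \<psi> nA nB (F (lA * x)) (G (lB * x)) = 0"
    unfolding arch_copula2_def using gen_inv_zero_if_log_convex[OF lc] by auto
  then show ?thesis using arch_copula2_nonneg[OF g] by simp
next
  case False
  let ?k = "gen_inv_exp \<psi>"
  have FlA: "0 < F (lA * x)" and GlB: "0 < G (lB * x)"
    using False abs_cont_cdf_nonneg_ge_0[OF F] abs_cont_cdf_nonneg_ge_0[OF G] by (simp_all add: less_le)
  have FmA: "0 < F (mA * x)" and "0 < F (mB * x)"
    using abs_cont_cdf_nonneg_pos_mono[OF F FlA] m x by (simp_all add: mult_right_mono)
  moreover have "F (mB * x) \<le> G (mB * x)"
    using cdf_le_of_rev_hazard_le[OF F G rGF dec] l m x by simp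
  ultimately have GmB: "0 < G (mB * x)" by linarith
  have le1: "F t \<le> 1" "G t \<le> 1" for t
    using abs_cont_cdf_nonneg_le_1[OF F] abs_cont_cdf_nonneg_le_1[OF G] by auto
  have "real nA * ?k (- ln (F (mA * x))) + real nB * ?k (- ln (G (mB * x)))
      \<le> real nA * ?k (- ln (F (lA * x))) + real nB * ?k (- ln (G (lB * x)))"
    by (rule weighted_neg_ln_cdf_le[OF F G rGF dec convex_on_gen_inv_exp[OF g lc]
          mono_on_gen_inv_exp[OF g]]) (use n x l m tot FlA in auto)
  moreover have "0 \<le> real nA * ?k (- ln (F (mA * x))) + real nB * ?k (- ln (G (mB * x)))"
    using gen_inv_exp_least(2)[OF g] FmA GmB le1 by simp
  moreover have "antimono_on {0..} \<psi>" using g by (simp add: generator_def)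
  ultimately have "\<psi> (real nA * ?k (- ln (F (lA * x))) + real nB * ?k (- ln (G (lB * x))))
      \<le> \<psi> (real nA * ?k (- ln (F (mA * x))) + real nB * ?k (- ln (G (mB * x))))"
    by (simp add: monotone_on_def)
  then show ?thesis using FlA GlB FmA GmB le1 by (simp add: arch_copula2_pos[OF g])
qed

lemma arch_copula_scale_le:
  assumes g: "generator \<psi>" and lc: "log_convex_on {0..} \<psi>"
    and F1: "abs_cont_cdf_nonneg F1 f1" and F2: "abs_cont_cdf_nonneg F2 f2"
    and dec: "antimono_on {0<..} (rev_hazard F1 f1) \<or> antimono_on {0<..} (rev_hazard F2 f2)"
    and n: "0 < n1" "0 < n2" and lam: "0 < lam1" "0 < lam2" and mu: "0 < mu1" "0 < mu2"
    and order:
      "((\<forall>x>0. rev_hazard F2 f2 x \<le> rev_hazard F1 f1 x) \<and> lam1 \<le> lam2 \<and> mu1 \<le> mu2) \<or>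
       ((\<forall>x>0. rev_hazard F1 f1 x \<le> rev_hazard F2 f2 x) \<and> lam2 \<le> lam1 \<and> mu2 \<le> mu1)"
    and min: "min lam1 lam2 \<le> min mu1 mu2"
    and tot: "real n1 * lam1 + real n2 * lam2 \<le> real n1 * mu1 + real n2 * mu2"
  shows "arch_copula \<psi> (n1 + n2) (\<lambda>i. if i < n1 then F1 (lam1 * x) else F2 (lam2 * x))
    \<le> arch_copula \<psi> (n1 + n2) (\<lambda>i. if i < n1 then F1 (mu1 * x) else F2 (mu2 * x))"
proof (cases "0 < x")
  case False
  have "F1 (lam1 * x) = F1 (mu1 * x)" "F2 (lam2 * x) = F2 (mu2 * x)"
    using False lam mu F1 F2 by (cases "x = 0"; simp add: abs_cont_cdf_nonneg_def mult_pos_neg)+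
  then show ?thesis by (simp only: order_refl)
next
  case True
  from order show ?thesis
  proof
    assume a: "(\<forall>x>0. rev_hazard F2 f2 x \<le> rev_hazard F1 f1 x) \<and> lam1 \<le> lam2 \<and> mu1 \<le> mu2"
    then show ?thesis
      using arch_copula2_scale_le[OF g lc F1 F2 _ dec n True lam(1)] min tot
      by (simp add: arch_copula_two_values n)
  next
    assume b: "(\<forall>x>0. rev_hazard F1 f1 x \<le> rev_hazard F2 f2 x) \<and> lam2 \<le> lam1 \<and> mu2 \<le> mu1"
    have "antimono_on {0<..} (rev_hazard F2 f2) \<or> antimono_on {0<..} (rev_hazard F1 f1)"
      using dec by blast
    then show ?thesis
      using b arch_copula2_scale_le[OF g lc F2 F1 _ _ n(2,1) True lam(2)] min tot
      by (simp add: arch_copula_two_values n arch_copula2_swap[of _ n1] add.commute)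
  qed
qed

lemma arch_copula_le_of_super_additive_log_convex:
  assumes g1: "generator \<psi>1" and g2: "generator \<psi>2"
    and sa: "super_additive_on {0..} (\<lambda>x. gen_inv \<psi>2 (\<psi>1 x))"
    and lc: "log_convex_on {0..} \<psi>1 \<or> log_convex_on {0..} \<psi>2"
    and scale: "\<And>\<psi>. generator \<psi> \<Longrightarrow> log_convex_on {0..} \<psi> \<Longrightarrow> arch_copula \<psi> n u \<le> arch_copula \<psi> n v"
    and u: "\<And>i. i < n \<Longrightarrow> 0 \<le> u i \<and> u i \<le> 1" and v: "\<And>i. i < n \<Longrightarrow> 0 \<le> v i \<and> v i \<le> 1"
  shows "arch_copula \<psi>1 n u \<le> arch_copula \<psi>2 n v"
  using lc
proof
  assume "log_convex_on {0..} \<psi>1"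
  then have "arch_copula \<psi>1 n u \<le> arch_copula \<psi>1 n v" by (rule scale[OF g1])
  also have "\<dots> \<le> arch_copula \<psi>2 n v" by (rule arch_copula_le_of_super_additive[OF g1 g2 sa v])
  finally show ?thesis .
next
  assume lc2: "log_convex_on {0..} \<psi>2"
  have "arch_copula \<psi>1 n u \<le> arch_copula \<psi>2 n u"
    by (rule arch_copula_le_of_super_additive[OF g1 g2 sa u])
  also have "\<dots> \<le> arch_copula \<psi>2 n v" by (rule scale[OF g2 lc2])
  finally show ?thesis .
qed

lemma sort_replicate_two_values:
  fixes a b :: "'a :: linorder"
  shows "sort (replicate n1 a @ replicate n2 b) =
    (if a \<le> b then replicate n1 a @ replicate n2 b else replicate n2 b @ replicate n1 a)"
proof (cases "a \<le> b")
  case True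
  then show ?thesis by (intro properties_for_sort) (auto simp: sorted_append)
next
  case False
  then have "sort (replicate n1 a @ replicate n2 b) = replicate n2 b @ replicate n1 a"
    by (intro properties_for_sort) (auto simp: sorted_append add.commute)
  then show ?thesis using False by simp
qed

lemma wmaj_ge_two_values:
  fixes a1 a2 b1 b2 :: real
  assumes n: "0 < n1" "0 < n2"
    and w: "wmaj_ge (replicate n1 a1 @ replicate n2 a2) (replicate n1 b1 @ replicate n2 b2)"
  shows "min a1 a2 \<le> min b1 b2" and "real n1 * a1 + real n2 * a2 \<le> real n1 * b1 + real n2 * b2"
proof -
  let ?a = "replicate n1 a1 @ replicate n2 a2" and ?b = "replicate n1 b1 @ replicate n2 b2"
  have head: "sum_list (take 1 (replicate n x @ replicate m y)) = x" if "0 < n" for n m and x :: real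
    using that by (cases n) auto
  have "sum_list (take 1 (sort ?a)) \<le> sum_list (take 1 (sort ?b))"
    using w n unfolding wmaj_ge_def by auto
  then show "min a1 a2 \<le> min b1 b2"
    unfolding sort_replicate_two_values using n by (auto simp: head min_def split: if_splits)
  have "sum_list (sort ?a) \<le> sum_list (sort ?b)"
    using w n unfolding wmaj_ge_def by (auto dest!: bspec[where x = "n1 + n2"])
  then show "real n1 * a1 + real n2 * a2 \<le> real n1 * b1 + real n2 * b2"
    unfolding sort_replicate_two_values by (auto simp: sum_list_replicate split: if_splits)
qed

lemma (in prob_space) prob_Max_gt:
  fixes X :: "'i \<Rightarrow> 'a \<Rightarrow> real"
  assumes I: "finite I" "I \<noteq> {}" and X: "\<And>i. i \<in> I \<Longrightarrow> X i \<in> borel_measurable M"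
  shows "prob {\<omega> \<in> space M. x < Max ((\<lambda>i. X i \<omega>) ` I)} = 1 - prob {\<omega> \<in> space M. \<forall>i\<in>I. X i \<omega> \<le> x}"
proof -
  have "{\<omega> \<in> space M. \<forall>i\<in>I. X i \<omega> \<le> x} \<in> events"
    by (rule sets.sets_Collect_finite_All'[OF _ I]) (use X in \<open>auto simp: borel_measurable_iff_le\<close>)
  moreover have "{\<omega> \<in> space M. x < Max ((\<lambda>i. X i \<omega>) ` I)}
      = space M - {\<omega> \<in> space M. \<forall>i\<in>I. X i \<omega> \<le> x}"
    using I by (auto simp: Max_gr_iff not_le)
  ultimately show ?thesis by (simp add: prob_compl)
qed

theorem theorem3p1:
  fixes M :: "'a measure" and N :: "'b measure"
    and X :: "nat \<Rightarrow> 'a \<Rightarrow> real" and Y :: "nat \<Rightarrow> 'b \<Rightarrow> real"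
    and n1 n2 :: nat
    and psi1 psi2 F1 F2 f1 f2 :: "real \<Rightarrow> real"
    and lam1 lam2 mu1 mu2 :: real
  assumes n1: "n1 \<ge> 1" and n2: "n2 \<ge> 1"
    and F1: "abs_cont_cdf_nonneg F1 f1" and F2: "abs_cont_cdf_nonneg F2 f2"
    and gen1: "arch_generator (n1 + n2) psi1" and gen2: "arch_generator (n1 + n2) psi2"
    and lam: "lam1 > 0" "lam2 > 0" and mu: "mu1 > 0" "mu2 > 0"
    and M: "prob_space M" and N: "prob_space N"
    and Xrv: "\<And>i. i < n1 + n2 \<Longrightarrow> X i \<in> borel_measurable M"
    and Yrv: "\<And>i. i < n1 + n2 \<Longrightarrow> Y i \<in> borel_measurable N"
    and Xmarg1: "\<And>i x. i < n1 \<Longrightarrow> measure M {\<omega> \<in> space M. X i \<omega> \<le> x} = F1 (lam1 * x)"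
    and Xmarg2: "\<And>i x. n1 \<le> i \<Longrightarrow> i < n1 + n2 \<Longrightarrow>
                   measure M {\<omega> \<in> space M. X i \<omega> \<le> x} = F2 (lam2 * x)"
    and Ymarg1: "\<And>i x. i < n1 \<Longrightarrow> measure N {\<omega> \<in> space N. Y i \<omega> \<le> x} = F1 (mu1 * x)"
    and Ymarg2: "\<And>i x. n1 \<le> i \<Longrightarrow> i < n1 + n2 \<Longrightarrow>
                   measure N {\<omega> \<in> space N. Y i \<omega> \<le> x} = F2 (mu2 * x)"
    and Xjoint: "\<And>z. measure M {\<omega> \<in> space M. \<forall>i < n1 + n2. X i \<omega> \<le> z i}
                   = arch_copula psi1 (n1 + n2)
                       (\<lambda>i. if i < n1 then F1 (lam1 * z i) else F2 (lam2 * z i))"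
    and Yjoint: "\<And>z. measure N {\<omega> \<in> space N. \<forall>i < n1 + n2. Y i \<omega> \<le> z i}
                   = arch_copula psi2 (n1 + n2)
                       (\<lambda>i. if i < n1 then F1 (mu1 * z i) else F2 (mu2 * z i))"
    and supadd: "super_additive_on {0..} (\<lambda>x. gen_inv psi2 (psi1 x))"
    and logcvx: "log_convex_on {0..} psi1 \<or> log_convex_on {0..} psi2"
    and rdec: "antimono_on {0<..} (rev_hazard F1 f1) \<or> antimono_on {0<..} (rev_hazard F2 f2)"
    and cases:
      "((\<forall>x > 0. rev_hazard F1 f1 x \<ge> rev_hazard F2 f2 x) \<and> n1 \<ge> n2 \<and>
          lam1 \<le> lam2 \<and> mu1 \<le> mu2) \<or>
       ((\<forall>x > 0. rev_hazard F1 f1 x \<le> rev_hazard F2 f2 x) \<and> n1 \<le> n2 \<and>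
          lam1 \<ge> lam2 \<and> mu1 \<ge> mu2)"
    and maj: "wmaj_ge (replicate n1 lam1 @ replicate n2 lam2) (replicate n1 mu1 @ replicate n2 mu2)"
  shows "\<forall>x. measure N {\<omega> \<in> space N. Max ((\<lambda>i. Y i \<omega>) ` {..<n1 + n2}) > x}
             \<le> measure M {\<omega> \<in> space M. Max ((\<lambda>i. X i \<omega>) ` {..<n1 + n2}) > x}"
proof
  fix x :: real
  let ?uX = "\<lambda>i. if i < n1 then F1 (lam1 * x) else F2 (lam2 * x)"
  let ?uY = "\<lambda>i. if i < n1 then F1 (mu1 * x) else F2 (mu2 * x)"
  have n: "0 < n1" "0 < n2" using n1 n2 by simp_all
  have order:
      "((\<forall>x>0. rev_hazard F2 f2 x \<le> rev_hazard F1 f1 x) \<and> lam1 \<le> lam2 \<and> mu1 \<le> mu2) \<or>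
       ((\<forall>x>0. rev_hazard F1 f1 x \<le> rev_hazard F2 f2 x) \<and> lam2 \<le> lam1 \<and> mu2 \<le> mu1)"
    using cases by blast
  have unit: "0 \<le> F1 t \<and> F1 t \<le> 1" "0 \<le> F2 t \<and> F2 t \<le> 1" for t
    using abs_cont_cdf_nonneg_ge_0 abs_cont_cdf_nonneg_le_1 F1 F2 by blast+
  have "arch_copula psi1 (n1 + n2) ?uX \<le> arch_copula psi2 (n1 + n2) ?uY"
  proof (rule arch_copula_le_of_super_additive_log_convex[OF _ _ supadd logcvx])
    show "generator psi1" "generator psi2"
      using gen1 gen2 by (simp_all add: arch_generator_imp_generator)
    show "arch_copula \<psi> (n1 + n2) ?uX \<le> arch_copula \<psi> (n1 + n2) ?uY"
      if "generator \<psi>" "log_convex_on {0..} \<psi>" for \<psi>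
      by (rule arch_copula_scale_le[OF that F1 F2 rdec n lam mu order wmaj_ge_two_values[OF n maj]])
  qed (simp_all add: unit)
  moreover have "measure M {\<omega> \<in> space M. Max ((\<lambda>i. X i \<omega>) ` {..<n1 + n2}) > x}
      = 1 - measure M {\<omega> \<in> space M. \<forall>i\<in>{..<n1 + n2}. X i \<omega> \<le> x}"
    by (rule prob_space.prob_Max_gt[OF M]) (use Xrv n in auto)
  moreover have "measure N {\<omega> \<in> space N. Max ((\<lambda>i. Y i \<omega>) ` {..<n1 + n2}) > x}
      = 1 - measure N {\<omega> \<in> space N. \<forall>i\<in>{..<n1 + n2}. Y i \<omega> \<le> x}"
    by (rule prob_space.prob_Max_gt[OF N]) (use Yrv n in auto)
  ultimately show "measure N {\<omega> \<in> space N. Max ((\<lambda>i. Y i \<omega>) ` {..<n1 + n2}) > x}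
      \<le> measure M {\<omega> \<in> space M. Max ((\<lambda>i. X i \<omega>) ` {..<n1 + n2}) > x}"
    using Xjoint[of "\<lambda>_. x"] Yjoint[of "\<lambda>_. x"] by (simp add: lessThan_iff Ball_def)
qed

end
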